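(* Let $p\ge2$, let $\boldsymbol{S}$ be a $p\times p$ symmetric positive semidefinite matrix, let $\rho>0$ be fixed and $k$ an integer with $0\le k\le\binom p2$. Let $\mathcal{C}=\{\boldsymbol{A}\in\mathbb{R}^{p\times p}:\boldsymbol{A}=\boldsymbol{A}^T,\ \|\boldsymbol{A}\|_0\le 2k+p\}$ and define $h_\rho(\boldsymbol{\Sigma})=\ln\det\boldsymbol{\Sigma}+\mathrm{tr}(\boldsymbol{\Sigma}^{-1}\boldsymbol{S})+\frac\rho2\mathrm{dist}(\boldsymbol{\Sigma},\mathcal{C})^2$ for $\boldsymbol{\Sigma}\succ\boldsymbol{0}$ and $h_\rho(\boldsymbol{\Sigma})=+\infty$ otherwise. Given $\boldsymbol{\Sigma}_0$, generate $\boldsymbol{\Sigma}_{k+1}=\boldsymbol{\Sigma}_k+\eta_k\boldsymbol{v}_k$ as follows: pick any $\boldsymbol{\Theta}_k\in P_{\mathcal{C}}(\boldsymbol{\Sigma}_k)$, let $\widehat{\boldsymbol{\Sigma}}_k$ be the unique solution of $\rho\widehat{\boldsymbol{\Sigma}}_k+\boldsymbol{\Sigma}_k^{-1}\widehat{\boldsymbol{\Sigma}}_k\boldsymbol{\Sigma}_k^{-1}=\rho\boldsymbol{\Theta}_k+\boldsymbol{\Sigma}_k^{-1}\boldsymbol{S}\boldsymbol{\Sigma}_k^{-1}$, set $\boldsymbol{v}_k=\widehat{\boldsymbol{\Sigma}}_k-\boldsymbol{\Sigma}_k$, and $\eta_k\in\mathrm{argmin}_{\eta\in[0,1]}h_\rho(\boldsymbol{\Sigma}_k+\eta\boldsymbol{v}_k)$.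 If $\boldsymbol{\Sigma}_0$ is positive definite and $\boldsymbol{S}$ is nonsingular, then the sequence $(\boldsymbol{\Sigma}_k)$ is bounded and lies in the interior of the positive definite cone, and every limit point $\boldsymbol{\Sigma}$ of the sequence is a stationary point of $h_\rho$, i.e. satisfies $\boldsymbol{\Sigma}^{-1}-\boldsymbol{\Sigma}^{-1}\boldsymbol{S}\boldsymbol{\Sigma}^{-1}+\rho(\boldsymbol{\Sigma}-\boldsymbol{\Theta})=\boldsymbol{0}$ for some $\boldsymbol{\Theta}\in P_{\mathcal{C}}(\boldsymbol{\Sigma})$.
   Context: $\|\boldsymbol{A}\|_0$ is the number of nonzero entries of $\boldsymbol{A}$; $\mathrm{dist}$ is Frobenius distance. $P_{\mathcal{C}}(\boldsymbol{\Sigma})$ denotes the (possibly multi-valued) set of Frobenius-nearest points of $\mathcal{C}$ to $\boldsymbol{\Sigma}$. The choice of $\boldsymbol{\Theta}_k$ within $P_{\mathcal{C}}(\boldsymbol{\Sigma}_k)$ is arbitrary, so the iteration is a set-valued algorithm map. *)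

theory Defs
  imports "HOL-Analysis.Analysis"
begin

type_synonym 'n mat = "real^'n^'n"

definition symmetric_mat :: "'n::finite mat \<Rightarrow> bool" where
  "symmetric_mat A \<longleftrightarrow> transpose A = A"

definition psd :: "'n::finite mat \<Rightarrow> bool" where
  "psd A \<longleftrightarrow> symmetric_mat A \<and> (\<forall>x. 0 \<le> x \<bullet> (A *v x))"

definition posdef :: "'n::finite mat \<Rightarrow> bool" where
  "posdef A \<longleftrightarrow> symmetric_mat A \<and> (\<forall>x. x \<noteq> 0 \<longrightarrow> 0 < x \<bullet> (A *v x))"

definition nnz :: "'n::finite mat \<Rightarrow> nat" where
  "nnz A = card {(i, j). A $ i $ j \<noteq> 0}"

definition sparse_set :: "nat \<Rightarrow> 'n::finite mat set" where
  "sparse_set k = {A. symmetric_mat A \<and> nnz A \<le> 2 * k + CARD('n)}"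

(* Note: on real^'n^'n, dist is exactly the Frobenius distance. *)
definition proj_set :: "'n::finite mat set \<Rightarrow> 'n mat \<Rightarrow> 'n mat set" where
  "proj_set C X = {T \<in> C. \<forall>A\<in>C. dist X T \<le> dist X A}"

definition h_rho :: "real \<Rightarrow> nat \<Rightarrow> 'n::finite mat \<Rightarrow> 'n mat \<Rightarrow> ereal" where
  "h_rho \<rho> k S X =
     (if posdef X
      then ereal (ln (det X) + trace (matrix_inv X ** S)
                  + \<rho> / 2 * (infdist X (sparse_set k))\<^sup>2)
      else \<infinity>)"

end

theory Submission
  imports Defs
begin

(* Symmetric matrices are orthogonally diagonalisable, so every matrix inequality
   needed reduces to one about eigenvalues. Taking eta = 0 in the line search shows that h_rho
   does not increase along the iteration; as h_rho is infinite off the positive definite cone,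
   all iterates are positive definite. On a sublevel set of ln det X + tr (X^-1 S), with
   S positive definite, s I <= S, every eigenvalue t of X satisfies ln t + s/t <= const, which
   confines it to a compact subinterval of (0, oo): the iterates are bounded and uniformly
   positive definite, and so is every limit point L.
   Along a subsequence, Theta and SigHat converge to some T in P_C(L) and to the solution Sh of
   the limiting equation, so v = Sh - L satisfies
     L^-1 - L^-1 S L^-1 + rho (L - T) = - (rho v + L^-1 v L^-1).
   Passing to the limit in the line-search inequalities, h_rho(L) <= h_rho(L + e v) for
   e in (0, 1). But concavity of ln det and the bound dist(X, C) <= |X - T| show that the
   one-sided derivative of h_rho at L along v is at most the inner product of v with the
   left-hand side, i.e. -(rho |v|^2 + <v, L^-1 v L^-1>), which is negative unless v = 0.
   Hence v = 0, and this is the stationarity equation. *)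

lemma matrix_inv_right:
  fixes A :: "'a::semiring_1^'n^'m"
  assumes "invertible A"
  shows "A ** matrix_inv A = mat 1"
  using someI_ex[OF assms[unfolded invertible_def]] unfolding matrix_inv_def by blast

lemma matrix_inv_left:
  fixes A :: "'a::semiring_1^'n^'m"
  assumes "invertible A"
  shows "matrix_inv A ** A = mat 1"
  using someI_ex[OF assms[unfolded invertible_def]] unfolding matrix_inv_def by blast

lemma matrix_inv_eqI:
  fixes A B :: "'a::field^'n^'n"
  assumes "A ** B = mat 1"
  shows "matrix_inv A = B"
proof -
  have inv: "invertible A" using assms invertible_right_inverse by blast
  have "matrix_inv A = matrix_inv A ** (A ** B)" using assms by simp
  also have "\<dots> = B" by (simp add: matrix_mul_assoc matrix_inv_left[OF inv])
  finally show ?thesis .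
qed

lemma inner_matrix_vector_mult: "(x::real^'m) \<bullet> (A *v y) = (transpose A *v x) \<bullet> (y::real^'n)"
  by (simp add: dot_lmul_matrix)

lemma inner_symmetric_matrix:
  fixes A :: "'n::finite mat"
  assumes "transpose A = A"
  shows "x \<bullet> (A *v y) = (A *v x) \<bullet> y"
  using inner_matrix_vector_mult[of x A y] assms by simp

lemma norm_matrix_vector_mult_le: "norm ((A::real^'n^'m) *v x) \<le> norm A * norm x"
proof -
  have "(norm (A *v x))\<^sup>2 = (\<Sum>i\<in>UNIV. ((A$i) \<bullet> x)\<^sup>2)"
    unfolding power2_norm_eq_inner by (simp add: inner_vec_def matrix_vector_mul_component power2_eq_square)
  also have "\<dots> \<le> (\<Sum>i\<in>UNIV. (norm (A$i))\<^sup>2 * (norm x)\<^sup>2)"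
  proof (rule sum_mono)
    fix i
    have "\<bar>A$i \<bullet> x\<bar> \<le> norm (A$i) * norm x" by (rule Cauchy_Schwarz_ineq2)
    then show "(A$i \<bullet> x)\<^sup>2 \<le> (norm (A$i))\<^sup>2 * (norm x)\<^sup>2"
      by (metis abs_ge_zero power2_abs power_mono power_mult_distrib)
  qed
  also have "\<dots> = (norm A * norm x)\<^sup>2"
    by (simp add: norm_vec_def L2_set_def sum_nonneg sum_distrib_right power_mult_distrib)
  finally show ?thesis by (simp add: power2_le_iff_abs_le)
qed

lemma norm_matrix_mult_le: "norm ((A::real^'n^'m) ** (B::real^'k^'n)) \<le> norm A * norm B"
proof -
  have col_sq: "(norm C)\<^sup>2 = (\<Sum>j\<in>UNIV. (norm (column j C))\<^sup>2)" for C :: "real^'k^'l"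
    by (simp add: power2_norm_eq_inner inner_vec_def column_def) (rule sum.swap)
  have "column j (A ** B) = A *v column j B" for j
    by (simp add: column_def matrix_matrix_mult_def matrix_vector_mult_def vec_eq_iff)
  then have "(norm (A ** B))\<^sup>2 = (\<Sum>j\<in>UNIV. (norm (A *v column j B))\<^sup>2)"
    by (simp add: col_sq)
  also have "\<dots> \<le> (\<Sum>j\<in>UNIV. (norm A)\<^sup>2 * (norm (column j B))\<^sup>2)"
    by (intro sum_mono) (simp add: power_mono norm_matrix_vector_mult_le flip: power_mult_distrib)
  also have "\<dots> = (norm A * norm B)\<^sup>2"
    by (simp add: col_sq[of B] sum_distrib_left power_mult_distrib)
  finally show ?thesis by (simp add: power2_le_iff_abs_le)
qed

lemma bounded_bilinear_matrix_mult:
  "bounded_bilinear ((**) :: real^'n^'m \<Rightarrow> real^'k^'n \<Rightarrow> real^'k^'m)"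
proof
  fix A A' :: "real^'n^'m" and B B' :: "real^'k^'n" and r :: real
  show "(A + A') ** B = A ** B + A' ** B"
    by (simp add: matrix_matrix_mult_def vec_eq_iff sum.distrib distrib_right)
  show "A ** (B + B') = A ** B + A ** B'" by (rule matrix_add_ldistrib)
  show "(r *\<^sub>R A) ** B = r *\<^sub>R (A ** B)" by (simp add: scalar_matrix_assoc)
  show "A ** (r *\<^sub>R B) = r *\<^sub>R (A ** B)" by (simp add: matrix_scalar_ac scalar_matrix_assoc)
next
  show "\<exists>K. \<forall>(A::real^'n^'m) (B::real^'k^'n). norm (A ** B) \<le> norm A * norm B * K"
    using norm_matrix_mult_le by (metis mult.right_neutral)
qed

interpretation matrix_mult: bounded_bilinear "(**) :: real^'n^'m \<Rightarrow> real^'k^'n \<Rightarrow> real^'k^'m"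
  by (rule bounded_bilinear_matrix_mult)

lemma transpose_add [simp]: "transpose (A + B) = transpose A + transpose (B :: 'a::ring^'n^'m)"
  by (simp add: transpose_def vec_eq_iff)

lemma transpose_diff [simp]: "transpose (A - B) = transpose A - transpose (B :: 'a::ring^'n^'m)"
  by (simp add: transpose_def vec_eq_iff)

lemma tendsto_transpose [tendsto_intros]:
  fixes X :: "'a \<Rightarrow> real^'n^'m"
  assumes "(X \<longlongrightarrow> L) F"
  shows "((\<lambda>x. transpose (X x)) \<longlongrightarrow> transpose L) F"
  unfolding transpose_def by (intro tendsto_intros assms)

lemma matrix_inv_diff:
  fixes X Y :: "'n::finite mat"
  assumes "invertible X" "invertible Y"
  shows "matrix_inv X - matrix_inv Y = matrix_inv X ** (Y - X) ** matrix_inv Y"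
  by (simp add: matrix_mult.diff_left matrix_mult.diff_right matrix_mul_assoc[symmetric]
      matrix_inv_right[OF assms(2)]) (simp add: matrix_mul_assoc matrix_inv_left[OF assms(1)])

lemma trace_scaleR: "trace (c *\<^sub>R A) = c * trace (A :: 'n::finite mat)"
  by (simp add: trace_def sum_distrib_left)

lemma trace_uminus: "trace (- A) = - trace (A :: 'n::finite mat)"
  by (simp add: trace_def sum_negf)

lemma trace_transpose_mult: "trace (transpose A ** B) = A \<bullet> (B :: real^'n^'m)"
  by (simp add: trace_def matrix_matrix_mult_def transpose_def inner_vec_def) (rule sum.swap)

lemma inner_matrix_mult_left: "A \<bullet> (B ** C) = (transpose B ** A) \<bullet> (C :: real^'k^'n)"
proof -
  have "A \<bullet> (B ** C) = trace (transpose A ** (B ** C))" by (rule trace_transpose_mult[symmetric])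
  also have "\<dots> = trace (transpose (transpose B ** A) ** C)"
    by (simp add: matrix_transpose_mul matrix_mul_assoc)
  finally show ?thesis by (simp only: trace_transpose_mult)
qed

lemma inner_matrix_mult_right: "A \<bullet> (B ** C) = (A ** transpose C) \<bullet> (B :: real^'n^'m)"
proof -
  have "A \<bullet> (B ** C) = trace ((transpose A ** B) ** C)"
    by (simp add: trace_transpose_mult[symmetric] matrix_mul_assoc)
  also have "\<dots> = trace (C ** (transpose A ** B))" by (rule trace_mul_sym)
  also have "\<dots> = trace (transpose (A ** transpose C) ** B)"
    by (simp add: matrix_transpose_mul matrix_mul_assoc)
  finally show ?thesis by (simp only: trace_transpose_mult)
qed

section \<open>Spectral theorem for symmetric matrices\<close>

definition diag_mat :: "('n::finite \<Rightarrow> real) \<Rightarrow> 'n mat" where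
  "diag_mat d = (\<chi> i j. if i = j then d i else 0)"

lemma diag_mat_mult_component: "(diag_mat d ** X) $ i $ j = d i * X $ i $ j"
  by (simp add: diag_mat_def matrix_matrix_mult_def if_distrib if_distribR sum.delta cong: if_cong)

lemma matrix_mult_diag_mat_component: "(X ** diag_mat d) $ i $ j = X $ i $ j * d j"
  by (simp add: diag_mat_def matrix_matrix_mult_def if_distrib if_distribR sum.delta' cong: if_cong)

lemma transpose_diag_mat [simp]: "transpose (diag_mat d) = diag_mat d"
  by (simp add: diag_mat_def transpose_def vec_eq_iff)

lemma diag_mat_mult: "diag_mat a ** diag_mat b = diag_mat (\<lambda>i. a i * b i)"
  by (simp add: vec_eq_iff diag_mat_mult_component) (simp add: diag_mat_def)

lemma diag_mat_one: "diag_mat (\<lambda>i. 1) = mat 1"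
  by (simp add: diag_mat_def mat_def)

lemma det_diag_mat: "det (diag_mat d) = (\<Prod>i\<in>UNIV. d i)"
  by (subst det_diagonal) (auto simp: diag_mat_def)

lemma trace_diag_mat: "trace (diag_mat d) = (\<Sum>i\<in>UNIV. d i)"
  by (simp add: trace_def diag_mat_def)

lemma quadratic_form_diag_mat: "y \<bullet> (diag_mat d *v y) = (\<Sum>i\<in>UNIV. d i * (y $ i)\<^sup>2)"
  by (simp add: diag_mat_def matrix_vector_mult_def inner_vec_def if_distrib if_distribR sum.delta
      power2_eq_square mult_ac cong: if_cong)

lemma rayleigh_maximiser_eigenvector:
  fixes A :: "'n::finite mat"
  assumes sym: "transpose A = A" and W: "subspace W" and AW: "\<And>y. y \<in> W \<Longrightarrow> A *v y \<in> W"
    and uW: "u \<in> W" and u1: "u \<bullet> u = 1"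
    and max: "\<And>y. y \<in> W \<Longrightarrow> y \<bullet> (A *v y) \<le> (u \<bullet> (A *v u)) * (y \<bullet> y)"
  shows "A *v u = (u \<bullet> (A *v u)) *\<^sub>R u"
proof -
  define l where "l = u \<bullet> (A *v u)"
  define w where "w = A *v u - l *\<^sub>R u"
  define c where "c = l * (w \<bullet> w) - w \<bullet> (A *v w)"
  have wW: "w \<in> W" unfolding w_def by (intro subspace_diff subspace_scale W AW uW)
  have wu: "u \<bullet> w = 0"
    using u1 by (simp add: w_def l_def inner_diff_right inner_symmetric_matrix[OF sym])
  have uAw: "u \<bullet> (A *v w) = w \<bullet> w"
    using wu by (simp add: inner_symmetric_matrix[OF sym] w_def inner_diff_left inner_commute)
  \<comment> \<open>maximality at \<open>u + t w\<close>; the linear term is \<open>2 t |w|\<^sup>2\<close> since \<open>w \<bottom> u\<close>\<close>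
  have quadratic: "2 * t * (w \<bullet> w) \<le> t\<^sup>2 * c" for t
  proof -
    have "u + t *\<^sub>R w \<in> W" by (intro subspace_add subspace_scale W uW wW)
    from max[OF this] have "l + 2 * t * (u \<bullet> (A *v w)) + t\<^sup>2 * (w \<bullet> (A *v w))
        \<le> l * (1 + t\<^sup>2 * (w \<bullet> w))"
      using u1 wu
      by (simp add: l_def matrix_vector_right_distrib inner_add_left inner_add_right
          inner_symmetric_matrix[OF sym, of w u] inner_commute power2_eq_square algebra_simps)
    then show ?thesis unfolding uAw c_def by (simp add: algebra_simps)
  qed
  have "2 * (w \<bullet> w) \<le> 0 + e" if "e > 0" for e
  proof -
    define t where "t = e / (\<bar>c\<bar> + 1)"
    have t: "t > 0" "t * c \<le> e"
      using that by (auto simp: t_def field_simps abs_if mult_left_mono_neg)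
    have "t * (2 * (w \<bullet> w)) \<le> t * (t * c)"
      using quadratic[of t] by (simp add: power2_eq_square algebra_simps)
    then show ?thesis using t by (simp add: mult_le_cancel_left_pos)
  qed
  then have "2 * (w \<bullet> w) \<le> 0" by (rule field_le_epsilon)
  then have "w \<bullet> w \<le> 0" by simp
  then have "w = 0" by (metis inner_gt_zero_iff not_le)
  then show ?thesis by (simp add: w_def l_def)
qed

lemma rayleigh_maximiser_exists:
  fixes A :: "'n::finite mat"
  assumes W: "subspace W" and x0: "x0 \<in> W" "x0 \<noteq> 0"
  obtains u where "u \<in> W" "u \<bullet> u = 1" "\<And>y. y \<in> W \<Longrightarrow> y \<bullet> (A *v y) \<le> (u \<bullet> (A *v u)) * (y \<bullet> y)"
proof -
  define K where "K = W \<inter> sphere 0 1"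
  have "x0 /\<^sub>R norm x0 \<in> K" using x0 W by (simp add: K_def subspace_mul)
  then have "K \<noteq> {}" by blast
  moreover have "compact K"
    unfolding K_def by (intro closed_Int_compact closed_subspace W compact_sphere)
  moreover have "continuous_on K (\<lambda>x. x \<bullet> (A *v x))"
    by (intro continuous_intros linear_continuous_on matrix_vector_mul_bounded_linear)
  ultimately obtain u where uK: "u \<in> K" and umax: "\<And>y. y \<in> K \<Longrightarrow> y \<bullet> (A *v y) \<le> u \<bullet> (A *v u)"
    by (metis continuous_attains_sup)
  have "y \<bullet> (A *v y) \<le> (u \<bullet> (A *v u)) * (y \<bullet> y)" if "y \<in> W" for y
  proof (cases "y = 0")
    case False
    then have "y /\<^sub>R norm y \<in> K" using that W by (simp add: K_def subspace_mul)
    from umax[OF this] have "(y \<bullet> (A *v y)) / (norm y)\<^sup>2 \<le> u \<bullet> (A *v u)"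
      by (simp add: matrix_vector_mult_scaleR power2_eq_square divide_inverse mult_ac)
    with False show ?thesis by (simp add: divide_le_eq power2_norm_eq_inner mult.commute)
  qed simp
  moreover have "u \<in> W" "u \<bullet> u = 1" using uK by (auto simp: K_def norm_eq_1)
  ultimately show ?thesis using that by blast
qed

lemma symmetric_eigenvector_orthogonal_to:
  fixes A :: "'n::finite mat"
  assumes sym: "transpose A = A" and fin: "finite B" and card: "card B < CARD('n)"
    and eig: "\<And>b. b \<in> B \<Longrightarrow> \<exists>l. A *v b = l *\<^sub>R b"
  obtains u l where "u \<bullet> u = 1" "\<And>b. b \<in> B \<Longrightarrow> orthogonal b u" "A *v u = l *\<^sub>R u"
proof -
  define W where "W = {y. \<forall>b\<in>B. orthogonal b y}"
  have W: "subspace W" unfolding W_def by (rule subspace_orthogonal_to_vectors)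
  have AW: "A *v y \<in> W" if "y \<in> W" for y
    unfolding W_def mem_Collect_eq
  proof
    fix b assume "b \<in> B"
    with eig obtain m where "A *v b = m *\<^sub>R b" by blast
    then show "orthogonal b (A *v y)"
      using that \<open>b \<in> B\<close> by (simp add: W_def orthogonal_def inner_symmetric_matrix[OF sym])
  qed
  have "dim B < DIM(real^'n)" using dim_le_card[OF span_superset fin] card by simp
  then obtain x0 :: "real^'n" where x0: "x0 \<noteq> 0" "\<And>y. y \<in> span B \<Longrightarrow> orthogonal x0 y"
    using orthogonal_to_subspace_exists by blast
  then have "x0 \<in> W" using x0(2)[OF span_base] by (auto simp: W_def orthogonal_commute)
  then obtain u where u: "u \<in> W" "u \<bullet> u = 1"
    and max: "\<And>y. y \<in> W \<Longrightarrow> y \<bullet> (A *v y) \<le> (u \<bullet> (A *v u)) * (y \<bullet> y)"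
    using rayleigh_maximiser_exists[OF W _ x0(1), of A] by blast
  then have "A *v u = (u \<bullet> (A *v u)) *\<^sub>R u" by (intro rayleigh_maximiser_eigenvector[OF sym W AW])
  then show ?thesis using that u by (auto simp: W_def)
qed

lemma symmetric_orthonormal_eigenvectors:
  fixes A :: "'n::finite mat"
  assumes sym: "transpose A = A" and "m \<le> CARD('n)"
  shows "\<exists>B. finite B \<and> card B = m \<and> pairwise orthogonal B \<and>
    (\<forall>b\<in>B. b \<bullet> b = 1 \<and> (\<exists>l. A *v b = l *\<^sub>R b))"
  using \<open>m \<le> CARD('n)\<close>
proof (induction m)
  case 0
  show ?case by (intro exI[of _ "{}"]) auto
next
  case (Suc m)
  then obtain B where B: "finite B" "card B = m" "pairwise orthogonal B"
    "\<forall>b\<in>B. b \<bullet> b = 1 \<and> (\<exists>l. A *v b = l *\<^sub>R b)" by auto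
  have "card B < CARD('n)" using B(2) Suc.prems by simp
  moreover have "\<And>b. b \<in> B \<Longrightarrow> \<exists>l. A *v b = l *\<^sub>R b" using B(4) by blast
  ultimately obtain u l where u: "u \<bullet> u = 1" "\<And>b. b \<in> B \<Longrightarrow> orthogonal b u" "A *v u = l *\<^sub>R u"
    using symmetric_eigenvector_orthogonal_to[OF sym B(1)] by blast
  have "u \<notin> B" using u(1) u(2)[of u] by (auto simp: orthogonal_def)
  moreover have "orthogonal u b" if "b \<in> B" for b
    using u(2)[OF that] by (simp add: orthogonal_commute)
  then have "pairwise orthogonal (insert u B)" by (rule pairwise_orthogonal_insert[OF B(3)])
  ultimately show ?case using B u by (intro exI[of _ "insert u B"]) auto
qed

theorem symmetric_spectral:
  fixes A :: "'n::finite mat"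
  assumes sym: "transpose A = A"
  obtains U d where "orthogonal_matrix U" "A = U ** diag_mat d ** transpose U"
proof -
  obtain B where B: "finite B" "card B = CARD('n)" "pairwise orthogonal B"
    "\<forall>b\<in>B. b \<bullet> b = 1 \<and> (\<exists>l. A *v b = l *\<^sub>R b)"
    using symmetric_orthonormal_eigenvectors[OF sym order_refl] by blast
  obtain f :: "'n \<Rightarrow> real^'n" where f: "bij_betw f UNIV B"
    using finite_same_card_bij[of "UNIV :: 'n set" B] B(1,2) by auto
  define d where "d i = (SOME l. A *v f i = l *\<^sub>R f i)" for i
  define U :: "'n mat" where "U = (\<chi> i j. f j $ i)"
  have fB: "f i \<in> B" for i using f by (auto simp: bij_betw_def)
  have eig: "A *v f i = d i *\<^sub>R f i" for i
    unfolding d_def using B(4) fB[of i] by (metis (mono_tags, lifting) someI_ex)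
  have "(transpose U ** U) $ i $ j = f i \<bullet> f j" for i j
    by (simp add: U_def transpose_def matrix_matrix_mult_def inner_vec_def)
  also have "f i \<bullet> f j = mat 1 $ i $ j" for i j
  proof (cases "i = j")
    case False
    then have "f i \<noteq> f j" using bij_betw_imp_inj_on[OF f] by (auto simp: inj_def)
    then show ?thesis using B(3) fB False by (auto simp: mat_def pairwise_def orthogonal_def)
  qed (use B(4) fB in \<open>simp add: mat_def\<close>)
  finally have U: "orthogonal_matrix U" by (simp add: orthogonal_matrix vec_eq_iff)
  have "(A ** U) $ i $ j = (A *v f j) $ i" for i j
    by (simp add: U_def matrix_matrix_mult_def matrix_vector_mult_def)
  also have "(A *v f j) $ i = (U ** diag_mat d) $ i $ j" for i j
    by (simp add: eig matrix_mult_diag_mat_component U_def)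
  finally have AU: "A ** U = U ** diag_mat d" by (simp add: vec_eq_iff)
  have "A = A ** (U ** transpose U)" using U by (simp add: orthogonal_matrix_def)
  also have "\<dots> = U ** diag_mat d ** transpose U" by (simp add: matrix_mul_assoc AU)
  finally have "A = U ** diag_mat d ** transpose U" .
  with U show ?thesis by (rule that)
qed

lemma orthogonal_matrix_sum_squares:
  fixes U :: "'n::finite mat"
  assumes "orthogonal_matrix U"
  shows "(\<Sum>i\<in>UNIV. ((transpose U *v x) $ i)\<^sup>2) = x \<bullet> x"
proof -
  have "(transpose U *v x) \<bullet> (transpose U *v x) = x \<bullet> (U *v (transpose U *v x))"
    by (simp add: inner_matrix_vector_mult del: transpose_matrix_vector)
  also have "\<dots> = x \<bullet> x"
    using assms by (simp add: matrix_vector_mul_assoc orthogonal_matrix_def del: transpose_matrix_vector)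
  finally show ?thesis by (simp add: inner_vec_def power2_eq_square del: transpose_matrix_vector)
qed

lemma orthogonal_matrix_column_unit:
  fixes U :: "'n::finite mat"
  assumes "orthogonal_matrix U"
  shows "(U *v axis i 1) \<bullet> (U *v axis i 1) = 1"
  using assms by (simp add: inner_matrix_vector_mult[of "U *v axis i 1"] matrix_vector_mul_assoc
      orthogonal_matrix_def inner_commute inner_axis_axis del: transpose_matrix_vector)

context
  fixes A U :: "'n::finite mat" and d :: "'n \<Rightarrow> real"
  assumes U: "orthogonal_matrix U" and A_eq: "A = U ** diag_mat d ** transpose U"
begin

(* The library simp rule transpose_matrix_vector would rewrite the eigenbasis coordinates
   transpose U *v x into x v* U. *)
declare transpose_matrix_vector [simp del]

lemma spectral_quadratic_form: "x \<bullet> (A *v x) = (\<Sum>i\<in>UNIV. d i * ((transpose U *v x) $ i)\<^sup>2)"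
proof -
  have "A *v x = U *v (diag_mat d *v (transpose U *v x))"
    by (simp add: A_eq matrix_vector_mul_assoc matrix_mul_assoc)
  then have "x \<bullet> (A *v x) = (transpose U *v x) \<bullet> (diag_mat d *v (transpose U *v x))"
    by (simp only: inner_matrix_vector_mult[of x U])
  then show ?thesis by (simp add: quadratic_form_diag_mat)
qed

lemma spectral_eigenvalue: "(U *v axis i 1) \<bullet> (A *v (U *v axis i 1)) = d i"
proof -
  have e: "transpose U *v (U *v axis i 1) = axis i 1"
    using U by (simp add: matrix_vector_mul_assoc orthogonal_matrix_def)
  have "(U *v axis i 1) \<bullet> (A *v (U *v axis i 1)) = (\<Sum>j\<in>UNIV. d j * ((axis i 1 :: real^'n) $ j)\<^sup>2)"
    unfolding spectral_quadratic_form e ..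
  also have "\<dots> = (\<Sum>j\<in>UNIV. if j = i then d i else 0)" by (rule sum.cong) (auto simp: axis_def)
  finally show ?thesis by simp
qed

lemma spectral_lower_bound:
  assumes "\<And>i. a \<le> d i"
  shows "a * (x \<bullet> x) \<le> x \<bullet> (A *v x)"
  unfolding spectral_quadratic_form orthogonal_matrix_sum_squares[OF U, symmetric] sum_distrib_left
  by (intro sum_mono mult_right_mono assms) simp

lemma spectral_upper_bound:
  assumes "\<And>i. d i \<le> b"
  shows "x \<bullet> (A *v x) \<le> b * (x \<bullet> x)"
  unfolding spectral_quadratic_form orthogonal_matrix_sum_squares[OF U, symmetric] sum_distrib_left
  by (intro sum_mono mult_right_mono assms) simp

lemma spectral_det: "det A = (\<Prod>i\<in>UNIV. d i)"
proof -
  have "det A = det (diag_mat d) * det (transpose U ** U)"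
    by (simp add: A_eq det_mul)
  then show ?thesis using U by (simp add: orthogonal_matrix_def det_diag_mat)
qed

lemma spectral_trace: "trace A = (\<Sum>i\<in>UNIV. d i)"
proof -
  have "trace A = trace (transpose U ** (U ** diag_mat d))" unfolding A_eq by (rule trace_mul_sym)
  then show ?thesis using U by (simp add: matrix_mul_assoc orthogonal_matrix_def trace_diag_mat)
qed

lemma spectral_matrix_inv:
  assumes "\<And>i. d i \<noteq> 0"
  shows "matrix_inv A = U ** diag_mat (\<lambda>i. 1 / d i) ** transpose U"
proof (rule matrix_inv_eqI)
  have "A ** (U ** diag_mat (\<lambda>i. 1 / d i) ** transpose U)
      = U ** (diag_mat d ** (transpose U ** U) ** diag_mat (\<lambda>i. 1 / d i)) ** transpose U"
    by (simp add: A_eq matrix_mul_assoc)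
  also have "\<dots> = mat 1"
    using U assms by (simp add: orthogonal_matrix_def diag_mat_mult diag_mat_one)
  finally show "A ** (U ** diag_mat (\<lambda>i. 1 / d i) ** transpose U) = mat 1" .
qed

lemma spectral_posdef:
  assumes "\<And>i. d i > 0"
  shows "posdef A"
  unfolding posdef_def symmetric_mat_def
proof (intro conjI allI impI)
  show "transpose A = A" by (simp add: A_eq matrix_transpose_mul matrix_mul_assoc)
  fix x :: "real^'n"
  assume "x \<noteq> 0"
  have "Min (range d) > 0" using assms by (subst Min_gr_iff) auto
  then have "0 < Min (range d) * (x \<bullet> x)" using \<open>x \<noteq> 0\<close> by simp
  also have "\<dots> \<le> x \<bullet> (A *v x)" by (rule spectral_lower_bound) simp
  finally show "0 < x \<bullet> (A *v x)" .
qed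

end

section \<open>Positive definite matrices\<close>

definition quadform_ge :: "real \<Rightarrow> 'n::finite mat \<Rightarrow> bool" where
  "quadform_ge a X \<longleftrightarrow> (\<forall>x. a * (x \<bullet> x) \<le> x \<bullet> (X *v x))"

lemma posdef_symmetric: "posdef X \<Longrightarrow> transpose X = X"
  by (simp add: posdef_def symmetric_mat_def)

lemma posdef_quadratic_form_nonneg: "posdef X \<Longrightarrow> 0 \<le> x \<bullet> (X *v x)"
  by (cases "x = 0") (auto simp: posdef_def less_imp_le)

lemma posdef_spectral:
  fixes X :: "'n::finite mat"
  assumes "posdef X"
  obtains U d where "orthogonal_matrix U" "X = U ** diag_mat d ** transpose U" "\<And>i. d i > 0"
proof -
  obtain U d where U: "orthogonal_matrix U" "X = U ** diag_mat d ** transpose U"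
    using symmetric_spectral[OF posdef_symmetric[OF assms]] by blast
  have "0 < (U *v axis i 1) \<bullet> (X *v (U *v axis i 1))" for i
    using assms orthogonal_matrix_column_unit[OF U(1), of i] unfolding posdef_def
    by (metis inner_zero_left zero_neq_one)
  then have "d i > 0" for i by (simp add: spectral_eigenvalue[OF U])
  with U show ?thesis by (rule that)
qed

lemma quadform_ge_posdef:
  fixes X :: "'n::finite mat"
  assumes "transpose X = X" "a > 0" "quadform_ge a X"
  shows "posdef X"
  unfolding posdef_def symmetric_mat_def
proof (intro conjI allI impI)
  fix x :: "real^'n"
  assume "x \<noteq> 0"
  then have "0 < a * (x \<bullet> x)" using assms(2) by simp
  also have "\<dots> \<le> x \<bullet> (X *v x)" using assms(3) by (simp add: quadform_ge_def)
  finally show "0 < x \<bullet> (X *v x)" .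
qed (fact assms(1))

lemma posdef_quadform_ge:
  assumes "posdef X"
  obtains a where "a > 0" "quadform_ge a X"
proof -
  obtain U d where U: "orthogonal_matrix U" "X = U ** diag_mat d ** transpose U" and d: "\<And>i. d i > 0"
    using posdef_spectral[OF assms] by blast
  have "quadform_ge (Min (range d)) X"
    unfolding quadform_ge_def by (auto intro: spectral_lower_bound[OF U])
  moreover have "Min (range d) > 0" using d by (subst Min_gr_iff) auto
  ultimately show ?thesis using that by blast
qed

lemma quadform_ge_eigenvalue:
  assumes U: "orthogonal_matrix U" "X = U ** diag_mat d ** transpose U" and "quadform_ge a X"
  shows "a \<le> d i"
  using assms(3) spectral_eigenvalue[OF U, of i] orthogonal_matrix_column_unit[OF U(1), of i]
  unfolding quadform_ge_def by (metis mult.right_neutral)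

lemma posdef_det_pos:
  assumes "posdef X"
  shows "det X > 0"
proof -
  obtain U d where U: "orthogonal_matrix U" "X = U ** diag_mat d ** transpose U" and d: "\<And>i. d i > 0"
    using posdef_spectral[OF assms] by blast
  show ?thesis using d by (simp add: spectral_det[OF U] prod_pos)
qed

lemma posdef_invertible: "posdef X \<Longrightarrow> invertible X"
  using posdef_det_pos invertible_det_nz by force

lemma posdef_matrix_inv:
  assumes "posdef X"
  shows "posdef (matrix_inv X)"
proof -
  obtain U d where U: "orthogonal_matrix U" "X = U ** diag_mat d ** transpose U" and d: "\<And>i. d i > 0"
    using posdef_spectral[OF assms] by blast
  have "matrix_inv X = U ** diag_mat (\<lambda>i. 1 / d i) ** transpose U"
    using d by (simp add: spectral_matrix_inv[OF U] less_imp_neq[symmetric])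
  from spectral_posdef[OF U(1) this] show ?thesis using d by simp
qed

lemma psd_invertible_posdef:
  assumes "psd S" "invertible S"
  shows "posdef S"
proof -
  have "transpose S = S" using assms(1) by (simp add: psd_def symmetric_mat_def)
  then obtain U d where U: "orthogonal_matrix U" "S = U ** diag_mat d ** transpose U"
    by (rule symmetric_spectral)
  have "d i \<ge> 0" for i using spectral_eigenvalue[OF U] assms(1) unfolding psd_def by metis
  moreover have "d i \<noteq> 0" for i
    using assms(2) by (simp add: invertible_det_nz spectral_det[OF U])
  ultimately show ?thesis by (intro spectral_posdef[OF U]) (simp add: order_le_neq_trans)
qed

lemma norm_le_sum_abs_components: "norm (A::'n::finite mat) \<le> (\<Sum>i\<in>UNIV. \<Sum>j\<in>UNIV. \<bar>A$i$j\<bar>)"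
proof -
  have "norm A \<le> (\<Sum>i\<in>UNIV. norm (A$i))" by (simp add: norm_vec_def L2_set_le_sum)
  also have "\<dots> \<le> (\<Sum>i\<in>UNIV. \<Sum>j\<in>UNIV. \<bar>A$i$j\<bar>)" by (intro sum_mono norm_le_l1_cart)
  finally show ?thesis .
qed

lemma inner_axis_matrix_vector_mult: "axis i 1 \<bullet> (A *v axis j 1) = A $ i $ j"
proof -
  have "(A *v axis j 1) $ i = A $ i $ j"
    by (simp add: matrix_vector_mult_def axis_def if_distrib if_distribR sum.delta' cong: if_cong)
  then show ?thesis by (simp add: inner_axis')
qed

lemma norm_le_quadratic_form_bound:
  fixes A :: "'n::finite mat"
  assumes sym: "transpose A = A" and psd: "\<And>x. 0 \<le> x \<bullet> (A *v x)"
    and ub: "\<And>x. x \<bullet> (A *v x) \<le> b * (x \<bullet> x)"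
  shows "norm A \<le> (real CARD('n))\<^sup>2 * b"
proof -
  have "\<bar>A$i$j\<bar> \<le> b" for i j
  proof -
    have "A$j$i = A$i$j" using sym by (metis transpose_def vec_lambda_beta)
    moreover have "A$i$i \<le> b" "A$j$j \<le> b"
      using ub[of "axis i 1"] ub[of "axis j 1"] by (simp_all add: inner_axis_matrix_vector_mult inner_axis_axis)
    moreover have "0 \<le> A$i$i + A$j$j + 2 * A$i$j" "0 \<le> A$i$i + A$j$j - 2 * A$i$j"
      using psd[of "axis i 1 + axis j 1"] psd[of "axis i 1 - axis j 1"] \<open>A$j$i = A$i$j\<close>
      by (simp_all add: matrix_vector_right_distrib matrix_vector_mult_diff_distrib inner_add_left
          inner_add_right inner_diff_left inner_diff_right inner_axis_matrix_vector_mult)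
    ultimately show ?thesis by linarith
  qed
  then have "(\<Sum>i\<in>UNIV. \<Sum>j\<in>UNIV. \<bar>A$i$j\<bar>) \<le> (\<Sum>i\<in>(UNIV::'n set). \<Sum>j\<in>(UNIV::'n set). b)"
    by (intro sum_mono)
  with norm_le_sum_abs_components[of A] have "norm A \<le> (\<Sum>i\<in>(UNIV::'n set). \<Sum>j\<in>(UNIV::'n set). b)"
    by linarith
  then show ?thesis by (simp add: power2_eq_square)
qed

lemma norm_matrix_inv_le:
  fixes X :: "'n::finite mat"
  assumes "posdef X" "quadform_ge a X" "a > 0"
  shows "norm (matrix_inv X) \<le> (real CARD('n))\<^sup>2 / a"
proof -
  obtain U d where U: "orthogonal_matrix U" "X = U ** diag_mat d ** transpose U" and d: "\<And>i. d i > 0"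
    using posdef_spectral[OF assms(1)] by blast
  have "1 / d i \<le> 1 / a" for i using quadform_ge_eigenvalue[OF U assms(2)] assms(3) by (simp add: frac_le)
  moreover have "matrix_inv X = U ** diag_mat (\<lambda>i. 1 / d i) ** transpose U"
    using d by (simp add: spectral_matrix_inv[OF U] less_imp_neq[symmetric])
  ultimately have ub: "x \<bullet> (matrix_inv X *v x) \<le> 1 / a * (x \<bullet> x)" for x
    using spectral_upper_bound[OF U(1)] by blast
  have "posdef (matrix_inv X)" by (rule posdef_matrix_inv[OF assms(1)])
  from norm_le_quadratic_form_bound[OF posdef_symmetric[OF this] posdef_quadratic_form_nonneg[OF this] ub]
  show ?thesis by simp
qed

lemma inner_conj_transpose: "X \<bullet> (U ** M ** transpose U) = (transpose U ** X ** U) \<bullet> (M :: 'n::finite mat)"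
proof -
  have "X \<bullet> (U ** M ** transpose U) = (X ** U) \<bullet> (U ** M)"
    using inner_matrix_mult_right[of X "U ** M" "transpose U"] by simp
  also have "\<dots> = (transpose U ** (X ** U)) \<bullet> M" by (rule inner_matrix_mult_left)
  finally show ?thesis by (simp add: matrix_mul_assoc)
qed

lemma posdef_inner_conj_nonneg:
  fixes A X :: "'n::finite mat"
  assumes "posdef A"
  shows "0 \<le> X \<bullet> (A ** X ** A)"
proof -
  obtain U d where U: "orthogonal_matrix U" "A = U ** diag_mat d ** transpose U" and d: "\<And>i. d i > 0"
    using posdef_spectral[OF assms] by blast
  define Y where "Y = transpose U ** X ** U"
  have "A ** X ** A = U ** (diag_mat d ** Y ** diag_mat d) ** transpose U"
    using U(1) by (simp add: U(2) Y_def matrix_mul_assoc orthogonal_matrix_def)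
  then have "X \<bullet> (A ** X ** A) = Y \<bullet> (diag_mat d ** Y ** diag_mat d)"
    by (simp add: inner_conj_transpose Y_def)
  also have "\<dots> = (\<Sum>i\<in>UNIV. \<Sum>j\<in>UNIV. (d i * d j) * (Y$i$j)\<^sup>2)"
    by (simp add: inner_vec_def diag_mat_mult_component matrix_mult_diag_mat_component
        power2_eq_square mult_ac)
  also have "\<dots> \<ge> 0" by (intro sum_nonneg mult_nonneg_nonneg) (simp_all add: d less_imp_le)
  finally show ?thesis .
qed

lemma posdef_ln_det_le_trace:
  fixes Z :: "'n::finite mat"
  assumes "posdef Z"
  shows "ln (det Z) \<le> trace Z - real CARD('n)"
proof -
  obtain U d where U: "orthogonal_matrix U" "Z = U ** diag_mat d ** transpose U" and d: "\<And>i. d i > 0"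
    using posdef_spectral[OF assms] by blast
  have "ln (det Z) = (\<Sum>i\<in>UNIV. ln (d i))"
    using d by (simp add: spectral_det[OF U] ln_prod less_imp_neq[symmetric])
  also have "\<dots> \<le> (\<Sum>i\<in>UNIV. d i - 1)" by (intro sum_mono ln_le_minus_one d)
  also have "\<dots> = trace Z - real CARD('n)" by (simp add: spectral_trace[OF U] sum_subtractf)
  finally show ?thesis .
qed

lemma posdef_congruence:
  fixes P W :: "'n::finite mat"
  assumes P: "posdef P" and W: "invertible W"
  shows "posdef (transpose W ** P ** W)"
  unfolding posdef_def symmetric_mat_def
proof (intro conjI allI impI)
  show "transpose (transpose W ** P ** W) = transpose W ** P ** W"
    using posdef_symmetric[OF P] by (simp add: matrix_transpose_mul matrix_mul_assoc)
  fix x :: "real^'n"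
  assume "x \<noteq> 0"
  then have "W *v x \<noteq> 0" using inj_matrix_vector_mult[OF W] by (metis injD matrix_vector_mult_0_right)
  then have "0 < (W *v x) \<bullet> (P *v (W *v x))" using P by (simp add: posdef_def)
  then show "0 < x \<bullet> ((transpose W ** P ** W) *v x)"
    by (simp add: matrix_vector_mul_assoc[symmetric] inner_matrix_vector_mult[of x "transpose W"]
        del: transpose_matrix_vector)
qed

lemma posdef_whitening:
  fixes L :: "'n::finite mat"
  assumes "posdef L"
  obtains W :: "'n mat" where "transpose W ** L ** W = mat 1" "W ** transpose W = matrix_inv L"
proof -
  obtain U d where U: "orthogonal_matrix U" "L = U ** diag_mat d ** transpose U" and d: "\<And>i. d i > 0"
    using posdef_spectral[OF assms] by blast
  have dnz: "d i \<noteq> 0" for i using d[of i] by simp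
  define W where "W = U ** diag_mat (\<lambda>i. 1 / sqrt (d i))"
  have "transpose W ** L ** W
      = diag_mat (\<lambda>i. 1 / sqrt (d i)) ** (transpose U ** U) ** diag_mat d ** (transpose U ** U)
          ** diag_mat (\<lambda>i. 1 / sqrt (d i))"
    by (simp add: W_def U(2) matrix_transpose_mul matrix_mul_assoc)
  also have "\<dots> = mat 1"
    using U(1) d by (simp add: orthogonal_matrix_def diag_mat_mult diag_mat_one abs_of_pos dnz)
  finally have "transpose W ** L ** W = mat 1" .
  moreover have "W ** transpose W
      = U ** (diag_mat (\<lambda>i. 1 / sqrt (d i)) ** diag_mat (\<lambda>i. 1 / sqrt (d i))) ** transpose U"
    by (simp add: W_def matrix_transpose_mul matrix_mul_assoc)
  then have "W ** transpose W = matrix_inv L"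
    using d by (simp add: diag_mat_mult abs_of_pos spectral_matrix_inv[OF U] dnz)
  ultimately show ?thesis by (rule that)
qed

lemma ln_det_concave:
  fixes L P :: "'n::finite mat"
  assumes L: "posdef L" and P: "posdef P"
  shows "ln (det P) \<le> ln (det L) + trace (matrix_inv L ** (P - L))"
proof -
  obtain W :: "'n mat" where W: "transpose W ** L ** W = mat 1" "W ** transpose W = matrix_inv L"
    using posdef_whitening[OF L] by blast
  have "invertible W" unfolding invertible_left_inverse using W(1) by (rule exI)
  \<comment> \<open>in the coordinates given by \<open>W\<close>, \<open>L\<close> becomes the identity and the claim becomes
     \<open>ln det Z \<le> tr Z - n\<close>\<close>
  define Z where "Z = transpose W ** P ** W"
  have Z: "posdef Z" unfolding Z_def by (rule posdef_congruence[OF P \<open>invertible W\<close>])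
  have "det (transpose W ** L ** W) = det W * det W * det L" by (simp add: det_mul)
  with W(1) have dW: "det W * det W * det L = 1" by simp
  have "det Z * det L = det P * (det W * det W * det L)" by (simp add: Z_def det_mul mult_ac)
  then have "det P = det Z * det L" by (simp add: dW)
  then have "ln (det P) = ln (det Z) + ln (det L)"
    using posdef_det_pos[OF Z] posdef_det_pos[OF L] by (simp add: ln_mult)
  moreover have "ln (det Z) \<le> trace Z - real CARD('n)" by (rule posdef_ln_det_le_trace[OF Z])
  moreover have "trace Z = trace (matrix_inv L ** P)"
  proof -
    have "trace Z = trace (W ** (transpose W ** P))" unfolding Z_def by (rule trace_mul_sym)
    then show ?thesis by (simp add: matrix_mul_assoc W(2))
  qed
  moreover have "trace (matrix_inv L ** P) - real CARD('n) = trace (matrix_inv L ** (P - L))"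
    by (simp add: matrix_mult.diff_right trace_sub matrix_inv_left[OF posdef_invertible[OF L]] trace_I)
  ultimately show ?thesis by linarith
qed

lemma tendsto_det [tendsto_intros]:
  fixes X :: "'a \<Rightarrow> 'n::finite mat"
  assumes "(X \<longlongrightarrow> L) F"
  shows "((\<lambda>x. det (X x)) \<longlongrightarrow> det L) F"
  unfolding det_def by (intro tendsto_intros assms)

lemma tendsto_trace [tendsto_intros]:
  fixes X :: "'a \<Rightarrow> 'n::finite mat"
  assumes "(X \<longlongrightarrow> L) F"
  shows "((\<lambda>x. trace (X x)) \<longlongrightarrow> trace L) F"
  unfolding trace_def by (intro tendsto_intros assms)

lemma tendsto_quadratic_form:
  fixes X :: "'a \<Rightarrow> 'n::finite mat"
  assumes "(X \<longlongrightarrow> L) F"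
  shows "((\<lambda>x. v \<bullet> (X x *v v)) \<longlongrightarrow> v \<bullet> (L *v v)) F"
  unfolding inner_vec_def matrix_vector_mult_def by (simp, intro tendsto_intros assms)

lemma symmetric_limit:
  fixes X :: "'a \<Rightarrow> 'n::finite mat"
  assumes "F \<noteq> bot" "(X \<longlongrightarrow> L) F" "eventually (\<lambda>x. transpose (X x) = X x) F"
  shows "transpose L = L"
proof -
  have "((\<lambda>x. transpose (X x)) \<longlongrightarrow> L) F"
    using assms(2) by (rule Lim_transform_eventually) (use assms(3) in \<open>simp add: eventually_mono\<close>)
  with tendsto_transpose[OF assms(2)] show ?thesis using assms(1) tendsto_unique by blast
qed

lemma quadform_ge_limit:
  fixes X :: "'a \<Rightarrow> 'n::finite mat"
  assumes "F \<noteq> bot" "(X \<longlongrightarrow> L) F" "eventually (\<lambda>x. quadform_ge a (X x)) F"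
  shows "quadform_ge a L"
  unfolding quadform_ge_def
proof
  fix v :: "real^'n"
  have "eventually (\<lambda>x. a * (v \<bullet> v) \<le> v \<bullet> (X x *v v)) F"
    using assms(3) by (rule eventually_mono) (simp add: quadform_ge_def)
  with assms(1) tendsto_quadratic_form[OF assms(2)] show "a * (v \<bullet> v) \<le> v \<bullet> (L *v v)"
    by (intro tendsto_le[OF _ _ tendsto_const]) auto
qed

lemma abs_quadratic_form_le: "\<bar>x \<bullet> (Y *v x)\<bar> \<le> norm (Y :: 'n::finite mat) * (x \<bullet> x)"
proof -
  have "\<bar>x \<bullet> (Y *v x)\<bar> \<le> norm x * norm (Y *v x)" by (rule Cauchy_Schwarz_ineq2)
  also have "\<dots> \<le> norm x * (norm Y * norm x)"
    by (simp add: mult_left_mono norm_matrix_vector_mult_le)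
  finally show ?thesis by (simp add: power2_norm_eq_inner[symmetric] power2_eq_square mult_ac)
qed

lemma quadform_ge_perturb:
  fixes X L :: "'n::finite mat"
  assumes "quadform_ge a L" "norm (X - L) \<le> a / 2"
  shows "quadform_ge (a / 2) X"
  unfolding quadform_ge_def
proof
  fix x :: "real^'n"
  have "x \<bullet> (X *v x) = x \<bullet> (L *v x) + x \<bullet> ((X - L) *v x)"
    by (simp add: matrix_vector_mult_diff_rdistrib inner_diff_right)
  moreover have "\<bar>x \<bullet> ((X - L) *v x)\<bar> \<le> a / 2 * (x \<bullet> x)"
    using abs_quadratic_form_le[of x "X - L"] assms(2) by (meson inner_ge_zero mult_right_mono order_trans)
  moreover have "a * (x \<bullet> x) \<le> x \<bullet> (L *v x)" using assms(1) by (simp add: quadform_ge_def)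
  ultimately show "a / 2 * (x \<bullet> x) \<le> x \<bullet> (X *v x)" by linarith
qed

lemma eventually_quadform_ge_near_posdef:
  fixes X :: "'a \<Rightarrow> 'n::finite mat"
  assumes lim: "(X \<longlongrightarrow> L) F" and L: "posdef L"
    and sym: "eventually (\<lambda>x. transpose (X x) = X x) F"
  obtains a where "a > 0" "eventually (\<lambda>x. posdef (X x) \<and> quadform_ge a (X x)) F"
proof -
  obtain a where a: "a > 0" "quadform_ge a L" using posdef_quadform_ge[OF L] by blast
  have "eventually (\<lambda>x. dist (X x) L < a / 2) F"
    using lim a(1) unfolding tendsto_iff by (meson half_gt_zero)
  with sym have "eventually (\<lambda>x. posdef (X x) \<and> quadform_ge (a / 2) (X x)) F"
  proof eventually_elim
    case (elim x)
    then have "quadform_ge (a / 2) (X x)"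
      using quadform_ge_perturb[OF a(2)] by (simp add: dist_norm)
    with elim a(1) show ?case using quadform_ge_posdef[of "X x" "a / 2"] by simp
  qed
  with a(1) show ?thesis using that half_gt_zero by blast
qed

lemma tendsto_matrix_inv:
  fixes X :: "'a \<Rightarrow> 'n::finite mat"
  assumes lim: "(X \<longlongrightarrow> L) F" and L: "posdef L"
    and sym: "eventually (\<lambda>x. transpose (X x) = X x) F"
  shows "((\<lambda>x. matrix_inv (X x)) \<longlongrightarrow> matrix_inv L) F"
proof -
  obtain a where a: "a > 0" and ev: "eventually (\<lambda>x. posdef (X x) \<and> quadform_ge a (X x)) F"
    using eventually_quadform_ge_near_posdef[OF assms] by blast
  define C where "C = (real CARD('n))\<^sup>2 / a * norm (matrix_inv L)"
  have "((\<lambda>x. matrix_inv (X x) - matrix_inv L) \<longlongrightarrow> 0) F"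
  proof (rule Lim_null_comparison)
    show "eventually (\<lambda>x. norm (matrix_inv (X x) - matrix_inv L) \<le> C * norm (X x - L)) F"
      using ev
    proof eventually_elim
      case (elim x)
      then have "norm (matrix_inv (X x) - matrix_inv L)
          = norm (matrix_inv (X x) ** (L - X x) ** matrix_inv L)"
        by (simp add: matrix_inv_diff posdef_invertible L)
      also have "\<dots> \<le> norm (matrix_inv (X x)) * norm (L - X x) * norm (matrix_inv L)"
        by (meson norm_matrix_mult_le mult_right_mono norm_ge_zero order_trans)
      also have "\<dots> \<le> (real CARD('n))\<^sup>2 / a * norm (L - X x) * norm (matrix_inv L)"
        using elim a by (intro mult_right_mono norm_matrix_inv_le) simp_all
      finally show ?case by (simp add: C_def norm_minus_commute mult_ac)
    qed
    show "((\<lambda>x. C * norm (X x - L)) \<longlongrightarrow> 0) F"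
      using tendsto_mult_right_zero tendsto_norm_zero LIM_zero[OF lim] by blast
  qed
  then show ?thesis by (rule LIM_zero_cancel)
qed

section \<open>The equation \<open>\<rho> X + A X A = R\<close>\<close>

(* This is the equation defining SigHat, with A = Sig^-1. For positive definite A the map
   X \<mapsto> rho X + A X A is positive definite for the Frobenius inner product. *)

lemma conj_equation_inner_le:
  fixes A X R :: "'n::finite mat"
  assumes A: "posdef A" and eq: "\<rho> *\<^sub>R X + A ** X ** A = R"
  shows "\<rho> * (X \<bullet> X) \<le> X \<bullet> R"
  using posdef_inner_conj_nonneg[OF A, of X] by (simp add: eq[symmetric] inner_add_right)

lemma conj_equation_norm_le:
  fixes A X R :: "'n::finite mat"
  assumes A: "posdef A" and rho: "\<rho> > 0" and eq: "\<rho> *\<^sub>R X + A ** X ** A = R"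
  shows "norm X \<le> norm R / \<rho>"
proof (cases "X = 0")
  case False
  have "\<rho> * (norm X * norm X) \<le> norm X * norm R"
    using conj_equation_inner_le[OF A eq] norm_cauchy_schwarz[of X R]
    by (simp add: power2_norm_eq_inner[symmetric] power2_eq_square)
  then show ?thesis using False rho by (simp add: field_simps mult_le_cancel_left_pos)
qed (use rho in simp)

lemma conj_equation_symmetric:
  fixes A X R :: "'n::finite mat"
  assumes A: "posdef A" and rho: "\<rho> > 0" and eq: "\<rho> *\<^sub>R X + A ** X ** A = R"
    and R: "transpose R = R"
  shows "transpose X = X"
proof -
  have "\<rho> *\<^sub>R transpose X + A ** transpose X ** A = R"
    using arg_cong[OF eq, of transpose] R posdef_symmetric[OF A]
    by (simp add: transpose_scalar matrix_transpose_mul matrix_mul_assoc)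
  with eq have "\<rho> *\<^sub>R (X - transpose X) + A ** (X - transpose X) ** A = 0"
    by (simp add: matrix_mult.diff_left matrix_mult.diff_right algebra_simps)
  from conj_equation_inner_le[OF A this] rho have "(X - transpose X) \<bullet> (X - transpose X) \<le> 0"
    by (simp add: mult_le_0_iff)
  then have "X - transpose X = 0" by (metis inner_gt_zero_iff not_le)
  then show ?thesis by simp
qed

section \<open>Sublevel sets of \<open>ln det X + tr (X\<inverse> S)\<close>\<close>

lemma ln_add_divide_ge:
  fixes a t :: real
  assumes "a > 0" "t > 0"
  shows "ln a + 1 \<le> ln t + a / t"
proof -
  have "ln (a / t) \<le> a / t - 1" using assms by (intro ln_le_minus_one) simp
  then show ?thesis using assms by (simp add: ln_div)
qed

lemma ln_add_divide_sublevel_bounded: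
  fixes s C :: real
  assumes s: "s > 0"
  obtains a b where "a > 0" "\<And>t. t > 0 \<Longrightarrow> ln t + s / t \<le> C \<Longrightarrow> a \<le> t \<and> t \<le> b"
proof
  define K where "K = C - ln (s / 2) - 1"
  show "s / (2 * max 1 K) > 0" using s by simp
  fix t :: real
  assume t: "t > 0" and le: "ln t + s / t \<le> C"
  have "0 < s / t" using s t by simp
  with le have "ln t \<le> C" by linarith
  then have "t \<le> exp C" using t by (metis exp_le_cancel_iff exp_ln)
  have "ln (s / 2) + 1 \<le> ln t + (s / 2) / t" using s t by (intro ln_add_divide_ge) simp_all
  moreover have "s / t = (s / 2) / t + (s / 2) / t" by simp
  ultimately have "(s / 2) / t \<le> max 1 K" using le unfolding K_def by linarith
  then have "s / (2 * max 1 K) \<le> t" using t by (simp add: field_simps)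
  with \<open>t \<le> exp C\<close> show "s / (2 * max 1 K) \<le> t \<and> t \<le> exp C" by simp
qed

lemma sum_le_imp_summand_le:
  fixes g :: "'a \<Rightarrow> real"
  assumes "finite A" "i \<in> A" "\<And>j. j \<in> A \<Longrightarrow> m \<le> g j" "sum g A \<le> c"
  shows "g i \<le> c - (real (card A) - 1) * m"
proof -
  have "sum g A = g i + sum g (A - {i})" using assms(1,2) by (simp add: sum.remove)
  moreover have "real (card (A - {i})) * m \<le> sum g (A - {i})"
    using assms(3) by (intro sum_bounded_below) simp
  moreover have "real (card (A - {i})) = real (card A) - 1"
    using assms(1,2) card_gt_0_iff[of A] by (auto simp: of_nat_diff Suc_le_eq)
  ultimately show ?thesis using assms(4) by simp
qed

lemma spectral_trace_inv_mult_ge: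
  fixes X S U :: "'n::finite mat"
  assumes U: "orthogonal_matrix U" "X = U ** diag_mat d ** transpose U" and d: "\<And>i. d i > 0"
    and S: "quadform_ge s S"
  shows "(\<Sum>i\<in>UNIV. s / d i) \<le> trace (matrix_inv X ** S)"
proof -
  have "trace (matrix_inv X ** S) = trace (U ** (diag_mat (\<lambda>i. 1 / d i) ** transpose U ** S))"
    using d by (simp add: spectral_matrix_inv[OF U] less_imp_neq[symmetric] matrix_mul_assoc)
  also have "\<dots> = trace (diag_mat (\<lambda>i. 1 / d i) ** (transpose U ** S ** U))"
    by (subst trace_mul_sym) (simp add: matrix_mul_assoc)
  also have "\<dots> = (\<Sum>i\<in>UNIV. (1 / d i) * (transpose U ** S ** U) $ i $ i)"
    by (simp add: trace_def diag_mat_mult_component)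
  finally have tr: "trace (matrix_inv X ** S) = \<dots>" .
  have diag: "s \<le> (transpose U ** S ** U) $ i $ i" for i
  proof -
    have "(transpose U ** S ** U) $ i $ i = (U *v axis i 1) \<bullet> (S *v (U *v axis i 1))"
      unfolding inner_axis_matrix_vector_mult[symmetric]
      by (simp add: matrix_vector_mul_assoc[symmetric] inner_matrix_vector_mult[of "axis i 1" "transpose U"]
          del: transpose_matrix_vector)
    then show ?thesis
      using S orthogonal_matrix_column_unit[OF U(1)] unfolding quadform_ge_def
      by (metis mult.right_neutral)
  qed
  show ?thesis unfolding tr
  proof (rule sum_mono)
    fix i
    show "s / d i \<le> 1 / d i * (transpose U ** S ** U) $ i $ i"
      using divide_right_mono[OF diag less_imp_le[OF d]] by simp
  qed
qed

lemma ln_det_trace_sublevel_bounded: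
  fixes S :: "'n::finite mat"
  assumes "posdef S"
  obtains a b where "a > 0"
    "\<And>X. posdef X \<Longrightarrow> ln (det X) + trace (matrix_inv X ** S) \<le> c \<Longrightarrow> quadform_ge a X \<and> norm X \<le> b"
proof -
  obtain s where s: "s > 0" "quadform_ge s S" using posdef_quadform_ge[OF assms] by blast
  define C where "C = c - (real CARD('n) - 1) * (ln s + 1)"
  obtain a b where a: "a > 0" and ab: "\<And>t. t > 0 \<Longrightarrow> ln t + s / t \<le> C \<Longrightarrow> a \<le> t \<and> t \<le> b"
    using ln_add_divide_sublevel_bounded[OF s(1)] by blast
  have "quadform_ge a X \<and> norm X \<le> (real CARD('n))\<^sup>2 * b"
    if X: "posdef X" and le: "ln (det X) + trace (matrix_inv X ** S) \<le> c" for X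
  proof -
    obtain U d where U: "orthogonal_matrix U" "X = U ** diag_mat d ** transpose U" and d: "\<And>i. d i > 0"
      using posdef_spectral[OF X] by blast
    have "ln (det X) = (\<Sum>i\<in>UNIV. ln (d i))"
      using d by (simp add: spectral_det[OF U] ln_prod less_imp_neq[symmetric])
    with le spectral_trace_inv_mult_ge[OF U d s(2)]
    have "(\<Sum>i\<in>UNIV. ln (d i) + s / d i) \<le> c" by (simp add: sum.distrib)
    then have "ln (d i) + s / d i \<le> C" for i
      unfolding C_def using ln_add_divide_ge[OF s(1) d]
      by (intro sum_le_imp_summand_le[where g = "\<lambda>i. ln (d i) + s / d i", simplified]) auto
    then have ad: "a \<le> d i" and db: "d i \<le> b" for i using ab d by blast+
    have "quadform_ge a X" unfolding quadform_ge_def using spectral_lower_bound[OF U ad] by blast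
    moreover have "norm X \<le> (real CARD('n))\<^sup>2 * b"
      using spectral_upper_bound[OF U db]
      by (intro norm_le_quadratic_form_bound posdef_symmetric[OF X] posdef_quadratic_form_nonneg[OF X])
    ultimately show ?thesis ..
  qed
  with a show ?thesis by (rule that)
qed

section \<open>The objective and its descent directions\<close>

definition h_rho_real :: "real \<Rightarrow> nat \<Rightarrow> 'n::finite mat \<Rightarrow> 'n mat \<Rightarrow> real" where
  "h_rho_real \<rho> k S X =
     ln (det X) + trace (matrix_inv X ** S) + \<rho> / 2 * (infdist X (sparse_set k))\<^sup>2"

lemma h_rho_posdef: "posdef X \<Longrightarrow> h_rho \<rho> k S X = ereal (h_rho_real \<rho> k S X)"
  by (simp add: h_rho_def h_rho_real_def)

lemma tendsto_h_rho_real: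
  fixes X :: "'a \<Rightarrow> 'n::finite mat"
  assumes lim: "(X \<longlongrightarrow> L) F" and L: "posdef L"
    and sym: "eventually (\<lambda>x. transpose (X x) = X x) F"
  shows "((\<lambda>x. h_rho_real \<rho> k S (X x)) \<longlongrightarrow> h_rho_real \<rho> k S L) F"
  unfolding h_rho_real_def
proof (intro tendsto_intros lim)
  show "det L \<noteq> 0" using posdef_det_pos[OF L] by simp
  show "((\<lambda>x. matrix_inv (X x) ** S) \<longlongrightarrow> matrix_inv L ** S) F"
    by (intro matrix_mult.tendsto tendsto_matrix_inv[OF lim L sym] tendsto_const)
qed

lemma zero_in_sparse_set: "0 \<in> sparse_set k"
  by (simp add: sparse_set_def symmetric_mat_def nnz_def transpose_def vec_eq_iff)

lemma closed_sparse_set: "closed (sparse_set k :: 'n::finite mat set)"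
  unfolding closed_sequential_limits
proof (intro allI impI, elim conjE)
  fix X :: "nat \<Rightarrow> 'n mat" and L
  assume XC: "\<forall>n. X n \<in> sparse_set k" and lim: "X \<longlonglongrightarrow> L"
  have "transpose L = L"
    using XC by (intro symmetric_limit[OF _ lim]) (simp_all add: sparse_set_def symmetric_mat_def)
  define N where "N = {(i, j). L $ i $ j \<noteq> 0}"
  have "eventually (\<lambda>n. X n $ i $ j \<noteq> 0) sequentially" if "(i, j) \<in> N" for i j
    using that by (intro tendsto_imp_eventually_ne[of _ "L $ i $ j"] tendsto_intros lim) (simp add: N_def)
  then have "eventually (\<lambda>n. \<forall>(i, j)\<in>N. X n $ i $ j \<noteq> 0) sequentially"
    by (intro eventually_ball_finite) auto
  then obtain n where "\<forall>(i, j)\<in>N. X n $ i $ j \<noteq> 0" using eventually_sequentially by auto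
  then have "card N \<le> nnz (X n)" unfolding nnz_def by (intro card_mono) auto
  also have "\<dots> \<le> 2 * k + CARD('n)" using XC by (simp add: sparse_set_def)
  finally show "L \<in> sparse_set k"
    using \<open>transpose L = L\<close> by (simp add: sparse_set_def symmetric_mat_def nnz_def N_def)
qed

lemma infdist_proj_set:
  assumes "T \<in> proj_set C X"
  shows "infdist X C = dist X T"
proof (rule antisym)
  have TC: "T \<in> C" and min: "\<And>A. A \<in> C \<Longrightarrow> dist X T \<le> dist X A"
    using assms by (auto simp: proj_set_def)
  show "infdist X C \<le> dist X T" by (rule infdist_le[OF TC])
  have "C \<noteq> {}" using TC by blast
  then show "dist X T \<le> infdist X C"
    unfolding infdist_notempty[OF \<open>C \<noteq> {}\<close>] by (intro cINF_greatest min)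
qed

lemma proj_set_limit:
  assumes C: "closed C" and X: "X \<longlonglongrightarrow> L" and T: "T' \<longlonglongrightarrow> T"
    and proj: "\<And>n. T' n \<in> proj_set C (X n)"
  shows "T \<in> proj_set C L"
  unfolding proj_set_def
proof (intro CollectI conjI ballI)
  show "T \<in> C"
    using C proj T unfolding closed_sequential_limits proj_set_def by blast
  fix A assume "A \<in> C"
  then have "eventually (\<lambda>n. dist (X n) (T' n) \<le> dist (X n) A) sequentially"
    using proj by (simp add: proj_set_def)
  moreover have "(\<lambda>n. dist (X n) (T' n)) \<longlonglongrightarrow> dist L T" by (intro tendsto_dist X T)
  moreover have "(\<lambda>n. dist (X n) A) \<longlonglongrightarrow> dist L A" by (intro tendsto_dist X tendsto_const)
  ultimately show "dist L T \<le> dist L A"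
    by (intro tendsto_le[OF trivial_limit_sequentially])
qed

lemma h_rho_real_segment_le:
  fixes L T v S :: "'n::finite mat"
  assumes L: "posdef L" and P: "posdef (L + e *\<^sub>R v)" and T: "T \<in> proj_set (sparse_set k) L"
    and rho: "\<rho> \<ge> 0"
  shows "h_rho_real \<rho> k S (L + e *\<^sub>R v) - h_rho_real \<rho> k S L
    \<le> e * (trace (matrix_inv L ** v) - trace (matrix_inv (L + e *\<^sub>R v) ** v ** matrix_inv L ** S)
           + \<rho> * ((L - T) \<bullet> v) + \<rho> / 2 * e * (v \<bullet> v))"
proof -
  let ?P = "L + e *\<^sub>R v" and ?C = "sparse_set k :: 'n mat set"
  have logdet: "ln (det ?P) \<le> ln (det L) + e * trace (matrix_inv L ** v)"
    using ln_det_concave[OF L P] by (simp add: matrix_mult.scaleR_right trace_scaleR)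
  have "matrix_inv ?P - matrix_inv L = (- e) *\<^sub>R (matrix_inv ?P ** v ** matrix_inv L)"
    by (simp add: matrix_inv_diff posdef_invertible L P matrix_mult.minus_left matrix_mult.minus_right
        matrix_mult.scaleR_left matrix_mult.scaleR_right)
  then have tr: "trace (matrix_inv ?P ** S) - trace (matrix_inv L ** S)
      = - e * trace (matrix_inv ?P ** v ** matrix_inv L ** S)"
    by (simp add: trace_sub[symmetric] matrix_mult.diff_left[symmetric] matrix_mult.scaleR_left
        matrix_mult.minus_left trace_scaleR trace_uminus)
  \<comment> \<open>the nearest point \<open>T\<close> of \<open>L\<close> still bounds the distance of \<open>?P\<close> to the constraint set\<close>
  have "T \<in> ?C" using T by (simp add: proj_set_def)
  then have "infdist ?P ?C \<le> norm ((L - T) + e *\<^sub>R v)"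
    using infdist_le[of T ?C ?P] by (simp add: dist_norm algebra_simps)
  then have "(infdist ?P ?C)\<^sup>2 \<le> (norm ((L - T) + e *\<^sub>R v))\<^sup>2"
    by (intro power_mono infdist_nonneg)
  also have "\<dots> = (infdist L ?C)\<^sup>2 + 2 * e * ((L - T) \<bullet> v) + e\<^sup>2 * (v \<bullet> v)"
    unfolding infdist_proj_set[OF T] dist_norm power2_norm_eq_inner
    by (simp add: inner_add_left inner_add_right inner_commute power2_eq_square algebra_simps)
  finally have dist: "(infdist ?P ?C)\<^sup>2 - (infdist L ?C)\<^sup>2 \<le> 2 * e * ((L - T) \<bullet> v) + e\<^sup>2 * (v \<bullet> v)"
    by simp
  have "h_rho_real \<rho> k S ?P - h_rho_real \<rho> k S L
      = (ln (det ?P) - ln (det L)) + (trace (matrix_inv ?P ** S) - trace (matrix_inv L ** S))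
        + \<rho> / 2 * ((infdist ?P ?C)\<^sup>2 - (infdist L ?C)\<^sup>2)"
    unfolding h_rho_real_def by (simp add: algebra_simps)
  also have "\<dots> \<le> e * trace (matrix_inv L ** v) + (- e * trace (matrix_inv ?P ** v ** matrix_inv L ** S))
      + \<rho> / 2 * (2 * e * ((L - T) \<bullet> v) + e\<^sup>2 * (v \<bullet> v))"
    using logdet tr dist rho by (intro add_mono mult_left_mono) simp_all
  also have "\<dots> = e * (trace (matrix_inv L ** v) - trace (matrix_inv ?P ** v ** matrix_inv L ** S)
           + \<rho> * ((L - T) \<bullet> v) + \<rho> / 2 * e * (v \<bullet> v))"
    by (simp add: algebra_simps power2_eq_square)
  finally show ?thesis .
qed

lemma first_variation_eq_inner_gradient:
  fixes Li S L T v :: "'n::finite mat"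
  assumes Li: "transpose Li = Li" and S: "transpose S = S"
  shows "trace (Li ** v) - trace (Li ** v ** Li ** S) + \<rho> * ((L - T) \<bullet> v)
       = (Li - Li ** S ** Li + \<rho> *\<^sub>R (L - T)) \<bullet> v"
proof -
  have "trace (Li ** v) = Li \<bullet> v" using trace_transpose_mult[of Li v] Li by simp
  moreover have "trace (Li ** v ** Li ** S) = (Li ** S ** Li) \<bullet> v"
  proof -
    have "trace (Li ** v ** Li ** S) = trace ((Li ** v) ** (Li ** S))" by (simp add: matrix_mul_assoc)
    also have "\<dots> = trace ((Li ** S) ** (Li ** v))" by (rule trace_mul_sym)
    also have "\<dots> = trace (transpose (Li ** S ** Li) ** v)"
      by (simp add: matrix_transpose_mul Li S matrix_mul_assoc)
    finally show ?thesis by (simp add: trace_transpose_mult)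
  qed
  ultimately show ?thesis by (simp add: inner_diff_left inner_add_left)
qed

lemma first_variation_neg:
  fixes L T v S :: "'n::finite mat"
  assumes L: "posdef L" and v: "v \<noteq> 0" and rho: "\<rho> > 0" and S: "transpose S = S"
    and grad: "matrix_inv L - matrix_inv L ** S ** matrix_inv L + \<rho> *\<^sub>R (L - T)
               = - (\<rho> *\<^sub>R v + matrix_inv L ** v ** matrix_inv L)"
  shows "trace (matrix_inv L ** v) - trace (matrix_inv L ** v ** matrix_inv L ** S)
           + \<rho> * ((L - T) \<bullet> v) < 0"
proof -
  let ?Li = "matrix_inv L"
  have "trace (?Li ** v) - trace (?Li ** v ** ?Li ** S) + \<rho> * ((L - T) \<bullet> v)
      = (?Li - ?Li ** S ** ?Li + \<rho> *\<^sub>R (L - T)) \<bullet> v"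
    by (rule first_variation_eq_inner_gradient[OF posdef_symmetric[OF posdef_matrix_inv[OF L]] S])
  also have "\<dots> = - (\<rho> * (v \<bullet> v) + v \<bullet> (?Li ** v ** ?Li))"
    using grad by (simp add: inner_add_left inner_commute inner_diff_right)
  moreover have "0 < \<rho> * (v \<bullet> v)" using rho v by simp
  ultimately show ?thesis using posdef_inner_conj_nonneg[OF posdef_matrix_inv[OF L], of v] by simp
qed

lemma exists_descent_step:
  fixes L T v S :: "'n::finite mat"
  assumes L: "posdef L" and v: "transpose v = v" "v \<noteq> 0" and rho: "\<rho> > 0"
    and T: "T \<in> proj_set (sparse_set k) L" and S: "transpose S = S"
    and grad: "matrix_inv L - matrix_inv L ** S ** matrix_inv L + \<rho> *\<^sub>R (L - T)
               = - (\<rho> *\<^sub>R v + matrix_inv L ** v ** matrix_inv L)"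
  obtains e where "0 < e" "e < 1" "posdef (L + e *\<^sub>R v)"
    "h_rho_real \<rho> k S (L + e *\<^sub>R v) < h_rho_real \<rho> k S L"
proof -
  define Li where "Li = matrix_inv L"
  \<comment> \<open>by \<open>h_rho_real_segment_le\<close>, \<open>e * \<beta> e\<close> bounds the increase of the objective along \<open>v\<close>\<close>
  define \<beta> where "\<beta> e = trace (Li ** v) - trace (matrix_inv (L + e *\<^sub>R v) ** v ** Li ** S)
    + \<rho> * ((L - T) \<bullet> v) + \<rho> / 2 * e * (v \<bullet> v)" for e
  have lim: "((\<lambda>e. L + e *\<^sub>R v) \<longlongrightarrow> L) (at_right 0)"
    by (intro tendsto_eq_intros) auto
  have sym: "eventually (\<lambda>e. transpose (L + e *\<^sub>R v) = L + e *\<^sub>R v) (at_right 0)"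
    using posdef_symmetric[OF L] v(1) by (simp add: transpose_scalar)
  have "((\<lambda>e. matrix_inv (L + e *\<^sub>R v)) \<longlongrightarrow> matrix_inv (L + 0 *\<^sub>R v)) (at_right 0)"
    using tendsto_matrix_inv[OF lim L sym] by simp
  then have "(\<beta> \<longlongrightarrow> \<beta> 0) (at_right 0)"
    unfolding \<beta>_def by (intro tendsto_intros matrix_mult.tendsto)
  moreover have "\<beta> 0 < 0"
    using first_variation_neg[OF L v(2) rho S grad] by (simp add: \<beta>_def Li_def)
  ultimately have "eventually (\<lambda>e. \<beta> e < 0) (at_right 0)" by (rule order_tendstoD)
  moreover have "eventually (\<lambda>e. e \<in> {0<..<1}) (at_right (0::real))"
    by (rule eventually_at_right_real) simp
  moreover obtain a where "eventually (\<lambda>e. posdef (L + e *\<^sub>R v) \<and> quadform_ge a (L + e *\<^sub>R v)) (at_right 0)"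
    using eventually_quadform_ge_near_posdef[OF lim L sym] by blast
  ultimately have "eventually (\<lambda>e. 0 < e \<and> e < 1 \<and> posdef (L + e *\<^sub>R v) \<and> \<beta> e < 0) (at_right 0)"
    by eventually_elim auto
  then obtain e where e: "0 < e" "e < 1" "posdef (L + e *\<^sub>R v)" "\<beta> e < 0"
    using eventually_happens[of _ "at_right (0::real)"] by auto
  have "h_rho_real \<rho> k S (L + e *\<^sub>R v) - h_rho_real \<rho> k S L \<le> e * \<beta> e"
    unfolding \<beta>_def Li_def using rho by (intro h_rho_real_segment_le[OF L e(3) T]) simp
  also have "\<dots> < 0" using e by (simp add: mult_pos_neg)
  finally show ?thesis using that e(1-3) by simp
qed

lemma stationary_of_no_descent:
  fixes L T Sh S :: "'n::finite mat"
  assumes L: "posdef L" and rho: "\<rho> > 0" and T: "T \<in> proj_set (sparse_set k) L"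
    and S: "transpose S = S" and Sh: "transpose Sh = Sh"
    and eq: "\<rho> *\<^sub>R Sh + matrix_inv L ** Sh ** matrix_inv L = \<rho> *\<^sub>R T + matrix_inv L ** S ** matrix_inv L"
    and no_descent: "\<And>e. 0 < e \<Longrightarrow> e < 1 \<Longrightarrow> posdef (L + e *\<^sub>R (Sh - L)) \<Longrightarrow>
      h_rho_real \<rho> k S L \<le> h_rho_real \<rho> k S (L + e *\<^sub>R (Sh - L))"
  shows "matrix_inv L - matrix_inv L ** S ** matrix_inv L + \<rho> *\<^sub>R (L - T) = 0"
proof -
  define Li where "Li = matrix_inv L"
  define v where "v = Sh - L"
  have vLi: "Li ** v ** Li = Li ** Sh ** Li - Li"
    using matrix_inv_left[OF posdef_invertible[OF L]]
    by (simp add: Li_def v_def matrix_mult.diff_left matrix_mult.diff_right matrix_mul_assoc)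
  have SLi: "Li ** S ** Li = \<rho> *\<^sub>R Sh + Li ** Sh ** Li - \<rho> *\<^sub>R T"
    using eq by (simp add: Li_def algebra_simps)
  have "\<rho> *\<^sub>R v = \<rho> *\<^sub>R Sh - \<rho> *\<^sub>R L" by (simp add: v_def scaleR_diff_right)
  then have grad: "Li - Li ** S ** Li + \<rho> *\<^sub>R (L - T) = - (\<rho> *\<^sub>R v + Li ** v ** Li)"
    unfolding vLi SLi by (simp add: algebra_simps)
  have "v = 0"
  proof (rule ccontr)
    assume "v \<noteq> 0"
    moreover have "transpose v = v" using Sh posdef_symmetric[OF L] by (simp add: v_def)
    ultimately obtain e where "0 < e" "e < 1" "posdef (L + e *\<^sub>R v)"
      "h_rho_real \<rho> k S (L + e *\<^sub>R v) < h_rho_real \<rho> k S L"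
      using exists_descent_step[OF L _ _ rho T S grad[unfolded Li_def]] by blast
    with no_descent show False by (fastforce simp: v_def)
  qed
  with grad show ?thesis by (simp add: Li_def)
qed

section \<open>The iteration\<close>

locale pd_line_search =
  fixes S :: "'n::finite mat" and \<rho> :: real and k :: nat
    and Sig Theta SigHat :: "nat \<Rightarrow> 'n mat" and eta :: "nat \<Rightarrow> real"
  assumes S: "posdef S" and rho: "\<rho> > 0"
    and Theta: "\<And>n. Theta n \<in> proj_set (sparse_set k) (Sig n)"
    and SigHat: "\<And>n. \<rho> *\<^sub>R SigHat n + matrix_inv (Sig n) ** SigHat n ** matrix_inv (Sig n)
                     = \<rho> *\<^sub>R Theta n + matrix_inv (Sig n) ** S ** matrix_inv (Sig n)"
    and eta_min: "\<And>n e. e \<in> {0..1} \<Longrightarrow>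
        h_rho \<rho> k S (Sig n + eta n *\<^sub>R (SigHat n - Sig n))
          \<le> h_rho \<rho> k S (Sig n + e *\<^sub>R (SigHat n - Sig n))"
    and step: "\<And>n. Sig (Suc n) = Sig n + eta n *\<^sub>R (SigHat n - Sig n)"
    and Sig0: "posdef (Sig 0)"
begin

abbreviation obj :: "'n mat \<Rightarrow> real" where
  "obj \<equiv> h_rho_real \<rho> k S"

lemma h_rho_Suc_le: "h_rho \<rho> k S (Sig (Suc n)) \<le> h_rho \<rho> k S (Sig n)"
  using eta_min[of 0 n] step[of n] by simp

lemma Sig_posdef: "posdef (Sig n)"
proof (induction n)
  case (Suc n)
  have "h_rho \<rho> k S (Sig (Suc n)) \<le> ereal (obj (Sig n))"
    using h_rho_Suc_le[of n] h_rho_posdef[OF Suc.IH] by simp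
  then show ?case by (auto simp: h_rho_def split: if_splits)
qed (fact Sig0)

lemma obj_decseq: "decseq (\<lambda>n. obj (Sig n))"
  using h_rho_Suc_le by (intro decseq_SucI) (simp add: h_rho_posdef Sig_posdef)

lemma Sig_uniform_bounds:
  obtains a B where "a > 0" "\<And>n. quadform_ge a (Sig n)" "\<And>n. norm (Sig n) \<le> B"
proof -
  obtain a B where a: "a > 0" and ab: "\<And>X. posdef X \<Longrightarrow>
      ln (det X) + trace (matrix_inv X ** S) \<le> obj (Sig 0) \<Longrightarrow> quadform_ge a X \<and> norm X \<le> B"
    using ln_det_trace_sublevel_bounded[OF S] by blast
  have "ln (det (Sig n)) + trace (matrix_inv (Sig n) ** S) \<le> obj (Sig n)" for n
    using rho by (simp add: h_rho_real_def)
  also have "obj (Sig n) \<le> obj (Sig 0)" for n using decseqD[OF obj_decseq] by simp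
  finally have bounds: "quadform_ge a (Sig n) \<and> norm (Sig n) \<le> B" for n by (rule ab[OF Sig_posdef])
  show ?thesis by (rule that[of a B, OF a]) (simp_all add: bounds)
qed

lemma bounded_Sig: "bounded (range Sig)"
proof -
  obtain a B where "a > 0" "\<And>n. quadform_ge a (Sig n)" "\<And>n. norm (Sig n) \<le> B"
    using Sig_uniform_bounds by blast
  then show ?thesis unfolding bounded_iff by blast
qed

lemma SigHat_symmetric: "transpose (SigHat n) = SigHat n"
proof (rule conj_equation_symmetric[OF posdef_matrix_inv[OF Sig_posdef] rho SigHat])
  have "transpose (Theta n) = Theta n"
    using Theta[of n] by (simp add: proj_set_def sparse_set_def symmetric_mat_def)
  then show "transpose (\<rho> *\<^sub>R Theta n + matrix_inv (Sig n) ** S ** matrix_inv (Sig n))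
      = \<rho> *\<^sub>R Theta n + matrix_inv (Sig n) ** S ** matrix_inv (Sig n)"
    using posdef_symmetric[OF S] posdef_symmetric[OF posdef_matrix_inv[OF Sig_posdef]]
    by (simp add: transpose_scalar matrix_transpose_mul matrix_mul_assoc)
qed

lemma norm_Theta_le: "norm (Theta n) \<le> 2 * norm (Sig n)"
proof -
  have "dist (Sig n) (Theta n) \<le> dist (Sig n) 0"
    using Theta[of n] zero_in_sparse_set[of k] unfolding proj_set_def by blast
  then have "norm (Sig n - Theta n) \<le> norm (Sig n)" by (simp add: dist_norm)
  moreover have "norm (Theta n) \<le> norm (Sig n) + norm (Sig n - Theta n)"
    by (metis norm_triangle_sub add.commute norm_minus_commute)
  ultimately show ?thesis by linarith
qed

lemma bounded_Theta: "bounded (range Theta)"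
proof -
  obtain a B where "a > 0" "\<And>n. quadform_ge a (Sig n)" and B: "\<And>n. norm (Sig n) \<le> B"
    using Sig_uniform_bounds by blast
  have "norm (Theta n) \<le> 2 * B" for n using norm_Theta_le[of n] B[of n] by linarith
  then show ?thesis unfolding bounded_iff by blast
qed

lemma bounded_SigHat: "bounded (range SigHat)"
proof -
  obtain a B where a: "a > 0" "\<And>n. quadform_ge a (Sig n)" and "\<And>n. norm (Sig n) \<le> B"
    using Sig_uniform_bounds by blast
  obtain BT where BT: "\<And>n. norm (Theta n) \<le> BT" using bounded_Theta unfolding bounded_iff by blast
  define BA where "BA = (real CARD('n))\<^sup>2 / a"
  have "norm (SigHat n) \<le> (\<rho> * BT + BA * norm S * BA) / \<rho>" for n
  proof -
    let ?A = "matrix_inv (Sig n)"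
    have A: "norm ?A \<le> BA" unfolding BA_def by (rule norm_matrix_inv_le[OF Sig_posdef a(2) a(1)])
    have "norm (?A ** S ** ?A) \<le> norm ?A * norm S * norm ?A"
      by (meson norm_matrix_mult_le mult_right_mono norm_ge_zero order_trans)
    also have "\<dots> \<le> BA * norm S * BA" using A a(1) by (intro mult_mono) (simp_all add: BA_def)
    finally have "norm (?A ** S ** ?A) \<le> BA * norm S * BA" .
    moreover have "norm (\<rho> *\<^sub>R Theta n) \<le> \<rho> * BT" using BT[of n] rho by (simp add: mult_left_mono)
    ultimately have "norm (\<rho> *\<^sub>R Theta n + ?A ** S ** ?A) \<le> \<rho> * BT + BA * norm S * BA"
      using norm_triangle_ineq[of "\<rho> *\<^sub>R Theta n" "?A ** S ** ?A"] by linarith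
    then have "norm (\<rho> *\<^sub>R Theta n + ?A ** S ** ?A) / \<rho> \<le> (\<rho> * BT + BA * norm S * BA) / \<rho>"
      using rho by (simp add: divide_right_mono)
    with conj_equation_norm_le[OF posdef_matrix_inv[OF Sig_posdef[of n]] rho SigHat[of n]] show ?thesis
      by linarith
  qed
  then show ?thesis unfolding bounded_iff by blast
qed

lemma limit_point_posdef:
  assumes "(Sig \<circ> r) \<longlonglongrightarrow> L"
  shows "posdef L"
proof -
  obtain a B where a: "a > 0" "\<And>n. quadform_ge a (Sig n)" and "\<And>n. norm (Sig n) \<le> B"
    using Sig_uniform_bounds by blast
  have "transpose L = L"
    by (rule symmetric_limit[OF _ assms]) (simp_all add: posdef_symmetric[OF Sig_posdef])
  moreover have "quadform_ge a L" by (rule quadform_ge_limit[OF _ assms]) (simp_all add: a)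
  ultimately show ?thesis using quadform_ge_posdef a(1) by blast
qed

lemma limit_point_le:
  assumes r: "strict_mono r" and lim: "(Sig \<circ> r) \<longlonglongrightarrow> L" and e: "e \<in> {0..1}"
  shows "ereal (obj L) \<le> h_rho \<rho> k S (Sig n + e *\<^sub>R (SigHat n - Sig n))"
proof -
  have "(\<lambda>m. obj ((Sig \<circ> r) m)) \<longlonglongrightarrow> obj L"
    by (intro tendsto_h_rho_real[OF lim limit_point_posdef[OF lim]])
      (simp add: posdef_symmetric[OF Sig_posdef])
  moreover have "eventually (\<lambda>m. obj ((Sig \<circ> r) m) \<le> obj (Sig (Suc n))) sequentially"
    unfolding eventually_sequentially
  proof (intro exI allI impI)
    fix m assume "Suc n \<le> m"
    then have "Suc n \<le> r m" using seq_suble[OF r, of m] by linarith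
    then show "obj ((Sig \<circ> r) m) \<le> obj (Sig (Suc n))" using decseqD[OF obj_decseq] by simp
  qed
  ultimately have "obj L \<le> obj (Sig (Suc n))" by (intro tendsto_le[OF _ tendsto_const]) simp_all
  then have "ereal (obj L) \<le> h_rho \<rho> k S (Sig (Suc n))" by (simp add: h_rho_posdef Sig_posdef)
  also have "\<dots> \<le> h_rho \<rho> k S (Sig n + e *\<^sub>R (SigHat n - Sig n))" using eta_min[OF e] step by simp
  finally show ?thesis .
qed

lemma limit_point_subsequence:
  assumes r: "strict_mono r" and lim: "(Sig \<circ> r) \<longlonglongrightarrow> L"
  obtains q T Sh where "(Sig \<circ> q) \<longlonglongrightarrow> L" "(Theta \<circ> q) \<longlonglongrightarrow> T" "(SigHat \<circ> q) \<longlonglongrightarrow> Sh"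
proof -
  obtain BT BH where BT: "\<And>n. norm (Theta n) \<le> BT" and BH: "\<And>n. norm (SigHat n) \<le> BH"
    using bounded_Theta bounded_SigHat unfolding bounded_iff by blast
  have "norm (Theta (r n), SigHat (r n)) \<le> BT + BH" for n
    by (rule order_trans[OF norm_Pair_le add_mono[OF BT BH]])
  then have bnd: "bounded (range (\<lambda>n. (Theta (r n), SigHat (r n))))" unfolding bounded_iff by blast
  obtain r' TS where r': "strict_mono r'" and TS: "((\<lambda>n. (Theta (r n), SigHat (r n))) \<circ> r') \<longlonglongrightarrow> TS"
    using bounded_imp_convergent_subsequence[OF bnd] by blast
  show ?thesis
  proof (rule that[of "r \<circ> r'" "fst TS" "snd TS"])
    show "(Sig \<circ> (r \<circ> r')) \<longlonglongrightarrow> L" using LIMSEQ_subseq_LIMSEQ[OF lim r'] by (simp add: o_assoc)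
    show "(Theta \<circ> (r \<circ> r')) \<longlonglongrightarrow> fst TS" using tendsto_fst[OF TS] by (simp add: comp_def)
    show "(SigHat \<circ> (r \<circ> r')) \<longlonglongrightarrow> snd TS" using tendsto_snd[OF TS] by (simp add: comp_def)
  qed
qed

lemma limit_point_equation:
  assumes L: "posdef L" and SigL: "(Sig \<circ> q) \<longlonglongrightarrow> L"
    and ThetaT: "(Theta \<circ> q) \<longlonglongrightarrow> T" and SigHatSh: "(SigHat \<circ> q) \<longlonglongrightarrow> Sh"
  shows "\<rho> *\<^sub>R Sh + matrix_inv L ** Sh ** matrix_inv L = \<rho> *\<^sub>R T + matrix_inv L ** S ** matrix_inv L"
proof -
  have "(\<lambda>n. matrix_inv (Sig (q n))) \<longlonglongrightarrow> matrix_inv L"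
    using tendsto_matrix_inv[OF SigL L] by (simp add: posdef_symmetric[OF Sig_posdef])
  then have "(\<lambda>n. \<rho> *\<^sub>R SigHat (q n) + matrix_inv (Sig (q n)) ** SigHat (q n) ** matrix_inv (Sig (q n)))
      \<longlonglongrightarrow> \<rho> *\<^sub>R Sh + matrix_inv L ** Sh ** matrix_inv L"
    and "(\<lambda>n. \<rho> *\<^sub>R Theta (q n) + matrix_inv (Sig (q n)) ** S ** matrix_inv (Sig (q n)))
      \<longlonglongrightarrow> \<rho> *\<^sub>R T + matrix_inv L ** S ** matrix_inv L"
    using SigHatSh ThetaT unfolding comp_def by (auto intro!: tendsto_intros matrix_mult.tendsto)
  then show ?thesis unfolding SigHat by (rule LIMSEQ_unique)
qed

lemma limit_point_no_descent:
  assumes r: "strict_mono r" and lim: "(Sig \<circ> r) \<longlonglongrightarrow> L"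
    and SigL: "(Sig \<circ> q) \<longlonglongrightarrow> L" and SigHatSh: "(SigHat \<circ> q) \<longlonglongrightarrow> Sh"
    and e: "e \<in> {0..1}" and P: "posdef (L + e *\<^sub>R (Sh - L))"
  shows "obj L \<le> obj (L + e *\<^sub>R (Sh - L))"
proof -
  define X where "X n = Sig (q n) + e *\<^sub>R (SigHat (q n) - Sig (q n))" for n
  have X: "X \<longlonglongrightarrow> L + e *\<^sub>R (Sh - L)"
    using SigL SigHatSh unfolding X_def comp_def by (intro tendsto_intros)
  have Xsym: "eventually (\<lambda>n. transpose (X n) = X n) sequentially"
    by (simp add: X_def transpose_scalar posdef_symmetric[OF Sig_posdef] SigHat_symmetric)
  obtain a where "eventually (\<lambda>n. posdef (X n) \<and> quadform_ge a (X n)) sequentially"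
    using eventually_quadform_ge_near_posdef[OF X P Xsym] by blast
  then have "eventually (\<lambda>n. obj L \<le> obj (X n)) sequentially"
  proof (rule eventually_mono)
    fix n assume "posdef (X n) \<and> quadform_ge a (X n)"
    moreover have "ereal (obj L) \<le> h_rho \<rho> k S (X n)"
      unfolding X_def by (rule limit_point_le[OF r lim e])
    ultimately show "obj L \<le> obj (X n)" by (simp add: h_rho_posdef)
  qed
  then show ?thesis by (intro tendsto_le[OF _ tendsto_h_rho_real[OF X P Xsym] tendsto_const]) simp
qed

lemma limit_point_stationary:
  assumes r: "strict_mono r" and lim: "(Sig \<circ> r) \<longlonglongrightarrow> L"
  shows "\<exists>T \<in> proj_set (sparse_set k) L.
           matrix_inv L - matrix_inv L ** S ** matrix_inv L + \<rho> *\<^sub>R (L - T) = 0"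
proof -
  obtain q T Sh where SigL: "(Sig \<circ> q) \<longlonglongrightarrow> L"
    and ThetaT: "(Theta \<circ> q) \<longlonglongrightarrow> T" and SigHatSh: "(SigHat \<circ> q) \<longlonglongrightarrow> Sh"
    using limit_point_subsequence[OF r lim] by blast
  have L: "posdef L" by (rule limit_point_posdef[OF lim])
  have T: "T \<in> proj_set (sparse_set k) L"
    by (rule proj_set_limit[OF closed_sparse_set SigL ThetaT]) (simp add: Theta)
  have Sh: "transpose Sh = Sh" by (rule symmetric_limit[OF _ SigHatSh]) (simp_all add: SigHat_symmetric)
  have "matrix_inv L - matrix_inv L ** S ** matrix_inv L + \<rho> *\<^sub>R (L - T) = 0"
    using limit_point_no_descent[OF r lim SigL SigHatSh]
    by (intro stationary_of_no_descent[OF L rho T posdef_symmetric[OF S] Sh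
          limit_point_equation[OF L SigL ThetaT SigHatSh]]) simp
  with T show ?thesis by blast
qed

end

theorem theorem1:
  fixes S :: "real^'p^'p"
    and \<rho> :: real
    and k :: nat
    and Sig Theta SigHat :: "nat \<Rightarrow> real^'p^'p"
    and eta :: "nat \<Rightarrow> real"
  assumes p2: "CARD('p) \<ge> 2"
    and S_psd: "psd S"
    and rho_pos: "\<rho> > 0"
    and k_le: "k \<le> CARD('p) choose 2"
    and Theta: "\<And>n. Theta n \<in> proj_set (sparse_set k) (Sig n)"
    and SigHat: "\<And>n. \<rho> *\<^sub>R SigHat n + matrix_inv (Sig n) ** SigHat n ** matrix_inv (Sig n)
                     = \<rho> *\<^sub>R Theta n + matrix_inv (Sig n) ** S ** matrix_inv (Sig n)"
    and eta_range: "\<And>n. eta n \<in> {0..1}"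
    and eta_min: "\<And>n e. e \<in> {0..1} \<Longrightarrow>
        h_rho \<rho> k S (Sig n + eta n *\<^sub>R (SigHat n - Sig n))
          \<le> h_rho \<rho> k S (Sig n + e *\<^sub>R (SigHat n - Sig n))"
    and step: "\<And>n. Sig (Suc n) = Sig n + eta n *\<^sub>R (SigHat n - Sig n)"
    and Sig0: "posdef (Sig 0)"
    and S_nonsing: "invertible S"
  shows "bounded (range Sig) \<and> (\<forall>n. posdef (Sig n)) \<and>
         (\<forall>L. (\<exists>r. strict_mono r \<and> (Sig \<circ> r) \<longlonglongrightarrow> L) \<longrightarrow>
              (\<exists>T \<in> proj_set (sparse_set k) L.
                 matrix_inv L - matrix_inv L ** S ** matrix_inv L + \<rho> *\<^sub>R (L - T) = 0))"
proof -
  interpret pd_line_search S \<rho> k Sig Theta SigHat eta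
    using psd_invertible_posdef[OF S_psd S_nonsing] rho_pos Theta SigHat eta_min step Sig0
    by unfold_locales
  show ?thesis using bounded_Sig Sig_posdef limit_point_stationary by blast
qed

end
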